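(* Fix $\kappa>0$ and $h\in(0,1)$. Let $G$ be a probability measure on $[h,1)$ and let $X_1,\dots,X_n\overset{iid}{\sim}f_G$, where $$f_G(x)=\int\frac{\Gamma(x+\kappa)}{x!\,\Gamma(\kappa)}p^\kappa(1-p)^x\,dG(p),\qquad x=0,1,\dots.$$ Let $t=-\log(1-h)/2>0$ and $A_h=\left(\frac{h}{1-\sqrt{1-h}}\right)^\kappa\in(0,\infty)$. For any $a>1$ let $K=\left\lceil\frac{a\log n+\log A_h}{t}\right\rceil$. Then for every integer $s\ge0$, $$\mathbb P_G(X_1\ge K+s)\le\frac{e^{-ts}}{n^a}.$$ *)

theory Defs
  imports "HOL-Probability.Probability"
begin

definition negbin_pmf :: "real \<Rightarrow> real \<Rightarrow> nat \<Rightarrow> real" where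
  "negbin_pmf \<kappa> p x = Gamma (real x + \<kappa>) / (fact x * Gamma \<kappa>) * p powr \<kappa> * (1 - p) ^ x"

definition f_mix :: "real \<Rightarrow> real measure \<Rightarrow> nat \<Rightarrow> real" where
  "f_mix \<kappa> G x = (\<integral>p. negbin_pmf \<kappa> p x \<partial>G)"

end

theory Submission
  imports Defs
begin

text \<open>For p in [h,1) the moment E_p c^X of the negative binomial law equals
  (p / (1 - (1-p) c))^\<kappa>, which is largest at p = h; the choice c = e^t = 1/sqrt(1-h)
  turns this maximum into A_h. Markov's inequality for c^X then gives
  P(X \<ge> m) \<le> A_h e^(-t m) for every component of the mixture, hence for f_G, and
  K is the least integer with A_h e^(-t K) \<le> n^(-a).\<close>

definition negbin_coeff :: "real \<Rightarrow> nat \<Rightarrow> real" where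
  "negbin_coeff \<kappa> x = Gamma (real x + \<kappa>) / (fact x * Gamma \<kappa>)"

lemma negbin_coeff_nonneg: "\<kappa> > 0 \<Longrightarrow> negbin_coeff \<kappa> x \<ge> 0"
  unfolding negbin_coeff_def by (intro divide_nonneg_pos mult_pos_pos Gamma_real_pos) auto

lemma negbin_pmf_altdef: "negbin_pmf \<kappa> p x = p powr \<kappa> * (negbin_coeff \<kappa> x * (1 - p) ^ x)"
  unfolding negbin_pmf_def negbin_coeff_def by (simp add: mult_ac)

lemma negbin_pmf_nonneg: "\<kappa> > 0 \<Longrightarrow> p \<le> 1 \<Longrightarrow> negbin_pmf \<kappa> p x \<ge> 0"
  unfolding negbin_pmf_altdef by (simp add: negbin_coeff_nonneg)

lemma gbinomial_neg_times_neg_power: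
  "((- \<kappa>) gchoose x) * (- z) ^ x = pochhammer \<kappa> x / fact x * (z :: real) ^ x"
proof -
  have "((- \<kappa>) gchoose x) * (- z) ^ x = ((-1) ^ x * (-1) ^ x) * (pochhammer \<kappa> x / fact x * z ^ x)"
    by (simp only: gbinomial_pochhammer minus_minus power_minus[of z] times_divide_eq_left
        times_divide_eq_right mult_ac)
  then show ?thesis
    by (simp flip: power_mult_distrib)
qed

lemma negbin_coeff_sums:
  assumes "\<kappa> > 0" and "\<bar>z\<bar> < 1"
  shows "(\<lambda>x. negbin_coeff \<kappa> x * z ^ x) sums (1 - z) powr (- \<kappa>)"
proof -
  have "\<kappa> \<notin> \<int>\<^sub>\<le>\<^sub>0"
    using assms(1) by (auto elim!: nonpos_Ints_cases)
  then have "((- \<kappa>) gchoose x) * (- z) ^ x = negbin_coeff \<kappa> x * z ^ x" for x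
    unfolding gbinomial_neg_times_neg_power negbin_coeff_def
    by (simp add: pochhammer_Gamma add.commute)
  moreover have "(\<lambda>x. ((- \<kappa>) gchoose x) * (- z) ^ x) sums (1 + (- z)) powr (- \<kappa>)"
    using assms(2) by (intro gen_binomial_real) simp
  ultimately show ?thesis
    by simp
qed

lemma negbin_pmf_times_power_sums:
  assumes "\<kappa> > 0" and "0 < p" and "\<bar>(1 - p) * c\<bar> < 1"
  shows "(\<lambda>x. negbin_pmf \<kappa> p x * c ^ x) sums (p / (1 - (1 - p) * c)) powr \<kappa>"
proof -
  have "(\<lambda>x. p powr \<kappa> * (negbin_coeff \<kappa> x * ((1 - p) * c) ^ x))
          sums (p powr \<kappa> * (1 - (1 - p) * c) powr (- \<kappa>))"
    by (intro sums_mult negbin_coeff_sums assms)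
  moreover have "0 < 1 - (1 - p) * c"
    using assms(3) by (simp add: abs_less_iff)
  then have "p powr \<kappa> * (1 - (1 - p) * c) powr (- \<kappa>) = (p / (1 - (1 - p) * c)) powr \<kappa>"
    using assms(2) by (simp add: powr_divide powr_minus_divide)
  ultimately show ?thesis
    by (simp add: negbin_pmf_altdef power_mult_distrib mult_ac)
qed

lemma negbin_pmf_sums: "\<kappa> > 0 \<Longrightarrow> 0 < p \<Longrightarrow> p \<le> 1 \<Longrightarrow> negbin_pmf \<kappa> p sums 1"
  using negbin_pmf_times_power_sums[of \<kappa> p 1] by simp

text \<open>Markov's inequality for the weight c^x, stated for series.\<close>
lemma sums_tail_le_weighted_sum:
  fixes b :: "nat \<Rightarrow> real"
  assumes b_sums: "b sums S" and bc_sums: "(\<lambda>x. b x * c ^ x) sums B"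
    and b_nonneg: "\<And>x. b x \<ge> 0" and "c \<ge> 1"
  shows "S - (\<Sum>x<m. b x) \<le> B / c ^ m"
proof -
  have tail: "S - (\<Sum>x<m. b x) = (\<Sum>x. b (x + m))"
    using suminf_split_initial_segment[OF sums_summable[OF b_sums], of m] sums_unique[OF b_sums]
    by simp
  have weighted_tail: "B - (\<Sum>x<m. b x * c ^ x) = (\<Sum>x. b (x + m) * c ^ (x + m))"
    using suminf_split_initial_segment[OF sums_summable[OF bc_sums], of m] sums_unique[OF bc_sums]
    by simp
  have "c ^ m * (\<Sum>x. b (x + m)) = (\<Sum>x. b (x + m) * c ^ m)"
    using summable_ignore_initial_segment[OF sums_summable[OF b_sums]]
    by (simp add: suminf_mult mult.commute)
  also have "\<dots> \<le> (\<Sum>x. b (x + m) * c ^ (x + m))"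
  proof (rule suminf_le)
    show "b (x + m) * c ^ m \<le> b (x + m) * c ^ (x + m)" for x
      using b_nonneg[of "x + m"] \<open>c \<ge> 1\<close> by (intro mult_left_mono power_increasing) auto
    show "summable (\<lambda>x. b (x + m) * c ^ m)"
      using summable_ignore_initial_segment[OF sums_summable[OF b_sums]] by (rule summable_mult2)
    show "summable (\<lambda>x. b (x + m) * c ^ (x + m))"
      using summable_ignore_initial_segment[OF sums_summable[OF bc_sums], of m] by simp
  qed
  also have "\<dots> \<le> B"
    using weighted_tail b_nonneg \<open>c \<ge> 1\<close> sum_nonneg[of "{..<m}" "\<lambda>x. b x * c ^ x"] by simp
  finally show ?thesis
    using \<open>c \<ge> 1\<close> by (simp add: tail field_simps)
qed

lemma negbin_tail_le:
  assumes "\<kappa> > 0" and "0 < h" "h \<le> p" "p \<le> 1" and "c \<ge> 1" "(1 - h) * c < 1"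
  shows "1 - (\<Sum>x<m. negbin_pmf \<kappa> p x) \<le> (h / (1 - (1 - h) * c)) powr \<kappa> / c ^ m"
proof -
  have "(1 - p) * c \<le> (1 - h) * c"
    using assms by (intro mult_right_mono) auto
  moreover have "0 \<le> (1 - p) * c"
    using assms by simp
  ultimately have pc: "\<bar>(1 - p) * c\<bar> < 1"
    using assms(6) unfolding abs_less_iff by linarith
  have "1 - (\<Sum>x<m. negbin_pmf \<kappa> p x) \<le> (p / (1 - (1 - p) * c)) powr \<kappa> / c ^ m"
    using assms pc
    by (intro sums_tail_le_weighted_sum[OF negbin_pmf_sums negbin_pmf_times_power_sums negbin_pmf_nonneg])
      auto
  also have "\<dots> \<le> (h / (1 - (1 - h) * c)) powr \<kappa> / c ^ m"
  proof (intro divide_right_mono powr_mono2)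
    have "p * (1 - (1 - h) * c) \<le> h * (1 - (1 - p) * c)"
      using mult_nonneg_nonneg[of "p - h" "c - 1"] assms by (simp add: algebra_simps)
    then show "p / (1 - (1 - p) * c) \<le> h / (1 - (1 - h) * c)"
      using assms pc by (simp add: abs_less_iff divide_le_eq le_divide_eq mult.commute)
  qed (use assms pc in auto)
  finally show ?thesis .
qed

lemma integrable_negbin_pmf:
  assumes "\<kappa> > 0" and "finite_measure G" and "sets G = sets borel"
    and "AE p in G. p \<in> {0..1}"
  shows "integrable G (\<lambda>p. negbin_pmf \<kappa> p x)"
proof (rule finite_measure.integrable_const_bound[OF assms(2)])
  show "AE p in G. norm (negbin_pmf \<kappa> p x) \<le> negbin_coeff \<kappa> x"
    using assms(4)
  proof eventually_elim
    case (elim p)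
    then have "p powr \<kappa> * (1 - p) ^ x \<le> 1"
      using assms(1) by (intro mult_le_one power_le_one) (auto intro: powr_le1)
    then show ?case
      using elim negbin_pmf_nonneg[OF assms(1)] negbin_coeff_nonneg[OF assms(1)]
      by (simp add: negbin_pmf_altdef mult_left_le mult.left_commute)
  qed
  have "(\<lambda>p. negbin_pmf \<kappa> p x) \<in> borel_measurable borel"
    unfolding negbin_pmf_def by measurable
  then show "(\<lambda>p. negbin_pmf \<kappa> p x) \<in> borel_measurable G"
    using assms(3) by (simp cong: measurable_cong_sets)
qed

lemma f_mix_tail_le:
  assumes "\<kappa> > 0" and "prob_space G" and "sets G = sets borel"
    and "AE p in G. p \<in> {h..1}" and "0 < h" and "c \<ge> 1" "(1 - h) * c < 1"
  shows "1 - (\<Sum>x<m. f_mix \<kappa> G x) \<le> (h / (1 - (1 - h) * c)) powr \<kappa> / c ^ m"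
proof -
  interpret G: prob_space G by fact
  have "AE p in G. p \<in> {0..1}"
    using assms(4) by (rule eventually_mono) (use \<open>0 < h\<close> in auto)
  then have intg: "integrable G (\<lambda>p. negbin_pmf \<kappa> p x)" for x
    by (intro integrable_negbin_pmf assms G.finite_measure_axioms)
  have "1 - (\<Sum>x<m. f_mix \<kappa> G x) = (\<integral>p. 1 - (\<Sum>x<m. negbin_pmf \<kappa> p x) \<partial>G)"
    using intg by (simp add: f_mix_def G.prob_space)
  also have "\<dots> \<le> (\<integral>p. (h / (1 - (1 - h) * c)) powr \<kappa> / c ^ m \<partial>G)"
  proof (rule integral_mono_AE)
    show "AE p in G. 1 - (\<Sum>x<m. negbin_pmf \<kappa> p x) \<le> (h / (1 - (1 - h) * c)) powr \<kappa> / c ^ m"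
      using assms(4) by (rule eventually_mono) (use assms in \<open>auto intro: negbin_tail_le\<close>)
  qed (use intg in auto)
  finally show ?thesis
    by (simp add: G.prob_space)
qed

lemma (in prob_space) prob_ge_eq_1_minus_sum:
  fixes X :: "'a \<Rightarrow> nat"
  assumes "X \<in> measurable M (count_space UNIV)"
  shows "prob {\<omega>\<in>space M. m \<le> X \<omega>} = 1 - (\<Sum>x<m. prob {\<omega>\<in>space M. X \<omega> = x})"
proof -
  have events: "{\<omega>\<in>space M. P (X \<omega>)} \<in> events" for P
    using measurable_sets[OF assms, of "{x. P x}"] by (simp add: vimage_def Int_def conj_commute)
  have "prob {\<omega>\<in>space M. X \<omega> < m} = (\<Sum>x<m. prob {\<omega>\<in>space M. X \<omega> = x})"
  proof (induction m)
    case (Suc m)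
    have "{\<omega>\<in>space M. X \<omega> < Suc m} = {\<omega>\<in>space M. X \<omega> < m} \<union> {\<omega>\<in>space M. X \<omega> = m}"
      by auto
    then show ?case
      using finite_measure_Union[OF events events, of "\<lambda>y. y < m" "\<lambda>y. y = m"] Suc by auto
  qed simp
  moreover have "{\<omega>\<in>space M. m \<le> X \<omega>} = space M - {\<omega>\<in>space M. X \<omega> < m}"
    by auto
  ultimately show ?thesis
    using prob_compl[OF events[of "\<lambda>y. y < m"]] by simp
qed

lemma (in prob_space) prob_int_ge_le_exp:
  fixes X :: "'a \<Rightarrow> nat"
  assumes "A \<ge> 0" "t \<ge> 0" and "\<And>m. prob {\<omega>\<in>space M. m \<le> X \<omega>} \<le> A * exp (- t * m)"
  shows "prob {\<omega>\<in>space M. k \<le> int (X \<omega>)} \<le> A * exp (- t * k)"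
proof -
  have "{\<omega>\<in>space M. k \<le> int (X \<omega>)} = {\<omega>\<in>space M. nat k \<le> X \<omega>}"
    by auto
  then have "prob {\<omega>\<in>space M. k \<le> int (X \<omega>)} \<le> A * exp (- t * nat k)"
    using assms(3) by simp
  also have "\<dots> \<le> A * exp (- t * k)"
    using assms(1,2) by (intro mult_left_mono) (auto intro: mult_left_mono)
  finally show ?thesis .
qed

lemma mult_exp_ceiling_le:
  fixes t A N a :: real
  assumes "t > 0" "A > 0" "N > 0"
  shows "A * exp (- t * \<lceil>(a * ln N + ln A) / t\<rceil>) \<le> 1 / N powr a"
proof -
  have "a * ln N + ln A \<le> t * \<lceil>(a * ln N + ln A) / t\<rceil>"
    using assms(1) by (metis le_of_int_ceiling mult.commute pos_divide_le_eq)
  then have "exp (- t * \<lceil>(a * ln N + ln A) / t\<rceil>) \<le> exp (- (a * ln N) - ln A)"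
    by simp
  also have "\<dots> = 1 / (N powr a * A)"
    using assms by (simp add: exp_diff exp_minus powr_def field_simps)
  finally show ?thesis
    using assms by (simp add: field_simps)
qed

lemma mult_exp_neg_half_ln:
  fixes y :: real
  assumes "0 < y"
  shows "y * exp (- ln y / 2) = sqrt y"
proof -
  have "sqrt y = exp (ln y / 2)"
    using assms by (simp add: powr_half_sqrt[symmetric] powr_def)
  then have sqrt_exp: "sqrt y * exp (- ln y / 2) = 1"
    by (simp flip: exp_add)
  have "y * exp (- ln y / 2) = sqrt y * (sqrt y * exp (- ln y / 2))"
    using assms by (simp flip: mult.assoc)
  then show ?thesis
    by (simp only: sqrt_exp mult_1_right)
qed

theorem lemmaD1:
  fixes \<kappa> h a :: real and n s :: nat and G :: "real measure"
    and M :: "'a measure" and X :: "'a \<Rightarrow> nat"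
  assumes kappa_pos: "\<kappa> > 0"
    and h_range: "0 < h" "h < 1"
    and G_prob: "prob_space G" and G_sets: "sets G = sets borel"
    and G_supp: "measure G {h..<1} = 1"
    and M_prob: "prob_space M"
    and X_meas: "X \<in> measurable M (count_space UNIV)"
    and X_dist: "\<And>x. measure M {\<omega>\<in>space M. X \<omega> = x} = f_mix \<kappa> G x"
    and n_pos: "n \<ge> 1"
    and a_gt: "a > 1"
  shows "let t = - ln (1 - h) / 2;
             A = (h / (1 - sqrt (1 - h))) powr \<kappa>;
             K = \<lceil>(a * ln (real n) + ln A) / t\<rceil>
         in measure M {\<omega>\<in>space M. int (X \<omega>) \<ge> K + int s} \<le> exp (- t * real s) / real n powr a"
proof -
  interpret M: prob_space M by fact
  define t where "t = - ln (1 - h) / 2"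
  define A where "A = (h / (1 - sqrt (1 - h))) powr \<kappa>"
  define K where "K = \<lceil>(a * ln (real n) + ln A) / t\<rceil>"
  have t_pos: "t > 0" and A_pos: "A > 0"
    using h_range by (auto simp: t_def A_def)
  have c: "(1 - h) * exp t = sqrt (1 - h)"
    unfolding t_def using h_range by (intro mult_exp_neg_half_ln) simp
  have G_AE: "AE p in G. p \<in> {h..1}"
    using prob_space.AE_prob_1[OF G_prob G_supp] by (rule eventually_mono) auto
  have tail: "M.prob {\<omega>\<in>space M. m \<le> X \<omega>} \<le> A * exp (- t * m)" for m :: nat
  proof -
    have "M.prob {\<omega>\<in>space M. m \<le> X \<omega>} = 1 - (\<Sum>x<m. f_mix \<kappa> G x)"
      by (simp add: M.prob_ge_eq_1_minus_sum[OF X_meas] X_dist)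
    also have "\<dots> \<le> (h / (1 - (1 - h) * exp t)) powr \<kappa> / exp t ^ m"
      using h_range c t_pos by (intro f_mix_tail_le[OF kappa_pos G_prob G_sets G_AE]) auto
    also have "\<dots> = A * exp (- t * m)"
      unfolding c A_def by (simp add: exp_minus exp_of_nat_mult[symmetric] divide_inverse mult.commute)
    finally show ?thesis .
  qed
  have "M.prob {\<omega>\<in>space M. K + int s \<le> int (X \<omega>)} \<le> A * exp (- t * (K + int s))"
    using A_pos t_pos tail by (intro M.prob_int_ge_le_exp) auto
  also have "\<dots> = A * exp (- t * K) * exp (- t * real s)"
    by (simp add: algebra_simps flip: exp_add)
  also have "\<dots> \<le> exp (- t * real s) / real n powr a"
    using mult_exp_ceiling_le[OF t_pos A_pos, of n a] n_pos by (simp add: K_def field_simps)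
  finally show ?thesis
    unfolding Let_def t_def[symmetric] A_def[symmetric] K_def[symmetric] .
qed

end
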